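(* For an integer $k\ge 2$, the graph $\Gamma_k$ is self color dual if and only if $k$ is a power of $2$.
   Context: Let $T_0(x)=x/2$ and $T_1(x)=(3x+1)/2$. For a positive integer $k$, $\Gamma_k$ is the directed graph on $\mathbb{Z}/k\mathbb{Z}$ with a black arrow $r\to s$ iff there exist positive integers $x\equiv r$, $y\equiv s\pmod k$ with $x$ even and $T_0(x)=y$, and a red arrow $r\to s$ iff there exist such $x,y$ with $x$ odd and $T_1(x)=y$. The color dual of a red/black edge-coloured digraph is obtained by swapping the colours of all arrows; the digraph is self color dual if there is a bijection $\rho$ of its vertex set such that for all vertices $u,w$: there is a black arrow $u\to w$ iff there is a red arrow $\rho(u)\to\rho(w)$, and there is a red arrow $u\to w$ iff there is a black arrow $\rho(u)\to\rho(w)$. *)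

theory Defs
  imports Main
begin

text \<open>Vertices of Gamma_k are the residues 0..k-1 (representing Z/kZ).\<close>

definition T0 :: "nat \<Rightarrow> nat" where "T0 x = x div 2"
definition T1 :: "nat \<Rightarrow> nat" where "T1 x = (3 * x + 1) div 2"

definition black_arrow :: "nat \<Rightarrow> nat \<Rightarrow> nat \<Rightarrow> bool" where
  "black_arrow k r s \<longleftrightarrow> (\<exists>x y. 0 < x \<and> 0 < y \<and> x mod k = r \<and> y mod k = s
       \<and> even x \<and> T0 x = y)"

definition red_arrow :: "nat \<Rightarrow> nat \<Rightarrow> nat \<Rightarrow> bool" where
  "red_arrow k r s \<longleftrightarrow> (\<exists>x y. 0 < x \<and> 0 < y \<and> x mod k = r \<and> y mod k = s
       \<and> odd x \<and> T1 x = y)"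

definition self_color_dual :: "nat \<Rightarrow> bool" where
  "self_color_dual k \<longleftrightarrow> (\<exists>\<rho>. bij_betw \<rho> {0..<k} {0..<k} \<and>
     (\<forall>u\<in>{0..<k}. \<forall>w\<in>{0..<k}.
        (black_arrow k u w \<longleftrightarrow> red_arrow k (\<rho> u) (\<rho> w)) \<and>
        (red_arrow k u w \<longleftrightarrow> black_arrow k (\<rho> u) (\<rho> w))))"

end

theory Submission
  imports Defs "HOL-Number_Theory.Number_Theory"
begin

(* Both arrow colours of Gamma_k are reductions of arrows x -> T x of the Collatz
   map T, black for even and red for odd x.

   Sufficiency (k = 2N with N = 2^n).  Then u -> w is an arrow of Gamma_k iff
   T u = w (mod N), coloured by the parity of u.  The parity vector of the first
   n+1 Collatz iterates is a bijection of Z/2^(n+1), and in these coordinates an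
   arrow p -> q becomes the binary shift relation  p div 2 = q mod N,  coloured by
   the last bit of p.  The complement p -> 2N-1-p preserves the shift relation and
   flips that bit, so conjugating it back gives the colour-swapping bijection.

   Necessity.  From a colour-swapping rho we build h(z) = rho(z mod k) + 1 on the
   integers; the arrows 2w -> w and 2m+1 -> 3m+2 give  3 h(2w) = 2 h(w)  and
   h(2m+1) + 1 = 2 h(3m+2)  (mod k).  These congruences rule out 3 | k, and with
   c = 1/3 mod k and k = 2^a M, M odd, they show that z -> h(2^a z) increases by a
   constant delta under translation by c, which together with the doubling rule
   forces 4 delta = 0, i.e. k | 2^(a+2). *)

definition collatz :: "nat \<Rightarrow> nat" where
  "collatz x = (if even x then T0 x else T1 x)"

lemma collatz_even [simp]: "collatz (2 * a) = a"
  by (simp add: collatz_def T0_def)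

lemma collatz_odd [simp]: "collatz (2 * a + 1) = 3 * a + 2"
  by (simp add: collatz_def T1_def)

lemma cong_double_iff: "[2 * a = 2 * b] (mod 2 * m) \<longleftrightarrow> [a = b] (mod m)"
  for a b m :: nat
  by (simp add: cong_def mod_mult_mult1)

lemma cong_double_Suc_iff: "[2 * a + 1 = 2 * b + 1] (mod 2 * m) \<longleftrightarrow> [a = b] (mod m)"
  for a b m :: nat
  by (metis cong_add_rcancel_nat cong_double_iff)

lemma collatz_cong:
  fixes x y m :: nat
  assumes "[x = y] (mod 2 * m)"
  shows "[collatz x = collatz y] (mod m)"
proof -
  have "[x = y] (mod 2)" using assms cong_modulus_mult_nat by blast
  then consider a b where "x = 2 * a" "y = 2 * b" | a b where "x = 2 * a + 1" "y = 2 * b + 1"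
    by (metis cong_def evenE oddE even_iff_mod_2_eq_zero)
  then show ?thesis
  proof cases
    case 1 then show ?thesis using assms by (simp add: cong_double_iff)
  next
    case 2
    then have "[a = b] (mod m)" using assms cong_double_Suc_iff by metis
    then show ?thesis unfolding 2 collatz_odd by (intro cong_add cong_scalar_left) auto
  qed
qed

lemma collatz_cong_iff:
  fixes x y m :: nat
  assumes "[x = y] (mod 2)" and "coprime 3 m"
  shows "[collatz x = collatz y] (mod m) \<longleftrightarrow> [x = y] (mod 2 * m)"
proof -
  consider a b where "x = 2 * a" "y = 2 * b" | a b where "x = 2 * a + 1" "y = 2 * b + 1"
    using assms(1) by (metis cong_def evenE oddE even_iff_mod_2_eq_zero)
  then show ?thesis
  proof cases
    case 1 then show ?thesis by (simp add: cong_double_iff)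
  next
    case 2
    have "[3 * a + 2 = 3 * b + 2] (mod m) \<longleftrightarrow> [a = b] (mod m)"
      using cong_add_rcancel_nat cong_mult_lcancel_nat assms(2) by metis
    then show ?thesis unfolding 2 collatz_odd cong_double_Suc_iff .
  qed
qed

fun parity_code :: "nat \<Rightarrow> nat \<Rightarrow> nat" where
  "parity_code 0 x = 0"
| "parity_code (Suc n) x = x mod 2 + 2 * parity_code n (collatz x)"

lemma parity_code_less: "parity_code n x < 2 ^ n"
proof (induction n arbitrary: x)
  case (Suc n)
  have "x mod 2 < 2" by simp
  then show ?case using Suc.IH[of "collatz x"] by simp
qed simp

lemma binary_digit_eq_iff:
  "b < 2 \<Longrightarrow> d < 2 \<Longrightarrow> b + 2 * p = d + 2 * q \<longleftrightarrow> b = d \<and> p = q"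
  for b d p q :: nat
  by presburger

lemma parity_code_eq_iff: "parity_code n x = parity_code n y \<longleftrightarrow> [x = y] (mod 2 ^ n)"
proof (induction n arbitrary: x y)
  case (Suc n)
  have "parity_code (Suc n) x = parity_code (Suc n) y \<longleftrightarrow>
      [x = y] (mod 2) \<and> parity_code n (collatz x) = parity_code n (collatz y)"
    unfolding cong_def parity_code.simps by (simp add: binary_digit_eq_iff)
  also have "\<dots> \<longleftrightarrow> [x = y] (mod 2) \<and> [x = y] (mod 2 * 2 ^ n)"
    using Suc.IH collatz_cong_iff[of x y "2 ^ n"] by auto
  also have "\<dots> \<longleftrightarrow> [x = y] (mod 2 ^ Suc n)"
    using cong_modulus_mult_nat[of x y 2] by auto
  finally show ?case .
qed simp

lemma mod_double_digit: "b < 2 \<Longrightarrow> (b + 2 * q) mod (2 * m) = b + 2 * (q mod m)"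
  for b q m :: nat
  using mod_mult2_eq[of "b + 2 * q" 2 m] by simp

lemma parity_code_trunc: "parity_code (Suc n) x mod 2 ^ n = parity_code n x"
proof (induction n arbitrary: x)
  case (Suc n)
  have "parity_code (Suc (Suc n)) x mod 2 ^ Suc n
      = (x mod 2 + 2 * parity_code (Suc n) (collatz x)) mod (2 * 2 ^ n)"
    by (simp only: parity_code.simps power_Suc)
  also have "\<dots> = x mod 2 + 2 * parity_code n (collatz x)"
    using mod_double_digit[of "x mod 2"] Suc.IH
    by (simp only: mod_less_divisor zero_less_numeral)
  finally show ?case by simp
qed simp

lemma black_arrow_collatz:
  "black_arrow k r s \<longleftrightarrow>
     (\<exists>x. 0 < x \<and> 0 < collatz x \<and> even x \<and> x mod k = r \<and> collatz x mod k = s)"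
  unfolding black_arrow_def collatz_def by auto

lemma red_arrow_collatz:
  "red_arrow k r s \<longleftrightarrow>
     (\<exists>x. 0 < x \<and> 0 < collatz x \<and> odd x \<and> x mod k = r \<and> collatz x mod k = s)"
  unfolding red_arrow_def collatz_def by auto

lemma collatz_pos: "2 \<le> x \<Longrightarrow> 0 < collatz x"
  by (auto simp: collatz_def T0_def T1_def)

lemma collatz_shift: "[collatz (x + 2 * N) = collatz x + N] (mod 2 * N)"
proof (cases "even x")
  case True
  then obtain a where x: "x = 2 * a" by (rule evenE)
  have "x + 2 * N = 2 * (a + N)" unfolding x by simp
  then have "collatz (x + 2 * N) = collatz x + N" unfolding x by (simp only: collatz_even)
  then show ?thesis by (simp only: cong_refl)
next
  case False
  then obtain a where x: "x = 2 * a + 1" using oddE by blast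
  have "x + 2 * N = 2 * (a + N) + 1" unfolding x by simp
  then have "collatz (x + 2 * N) = 3 * (a + N) + 2" by (simp only: collatz_odd)
  also have "\<dots> = (collatz x + N) + 2 * N" unfolding x collatz_odd by simp
  finally show ?thesis unfolding cong_def by (simp only: mod_add_self2)
qed

lemma cong_half_modulus_cases:
  fixes v w N :: nat
  assumes "[v = w] (mod N)"
  shows "[v = w] (mod 2 * N) \<or> [v + N = w] (mod 2 * N)"
proof (cases "N = 0")
  case False
  have zsplit: "z mod (2 * N) = N * (z div N mod 2) + z mod N" for z
    using mod_mult2_eq[of z N 2] by (simp add: mult.commute)
  have shift: "(v + N) div N = v div N + 1" "(v + N) mod N = v mod N"
    using False by simp_all
  have vw: "v mod N = w mod N" using assms unfolding cong_def .
  have "p mod 2 = q mod 2 \<or> (p + 1) mod 2 = q mod 2" for p q :: nat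
    by presburger
  then consider "v div N mod 2 = w div N mod 2" | "(v div N + 1) mod 2 = w div N mod 2"
    by blast
  then show ?thesis
  proof cases
    case 1
    then have "v mod (2 * N) = w mod (2 * N)" by (simp only: zsplit vw)
    then show ?thesis unfolding cong_def ..
  next
    case 2
    then have "(v + N) mod (2 * N) = w mod (2 * N)" by (simp only: zsplit shift vw)
    then show ?thesis unfolding cong_def ..
  qed
qed (use assms in simp)

lemma collatz_lift:
  fixes u w N :: nat
  assumes "[collatz u = w] (mod N)"
  obtains x where "x = u + 2 * N \<or> x = u + 4 * N" and "[collatz x = w] (mod 2 * N)"
proof -
  have once: "[collatz (u + 2 * N) = collatz u + N] (mod 2 * N)"
    by (rule collatz_shift)
  have "[collatz (u + 4 * N) = collatz (u + 2 * N) + N] (mod 2 * N)"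
    using collatz_shift[of "u + 2 * N" N] by (simp add: add.assoc)
  also have "[collatz (u + 2 * N) + N = collatz u + 2 * N] (mod 2 * N)"
    using cong_add[OF once cong_refl[of N]] by (simp add: add.assoc mult_2)
  finally have twice: "[collatz (u + 4 * N) = collatz u] (mod 2 * N)"
    by (simp add: cong_def)
  from cong_half_modulus_cases[OF assms] show ?thesis
  proof
    assume "[collatz u = w] (mod 2 * N)"
    then show ?thesis using that twice cong_trans by blast
  next
    assume "[collatz u + N = w] (mod 2 * N)"
    then show ?thesis using that once cong_trans by blast
  qed
qed

lemma arrow_char:
  fixes N u w :: nat and e :: bool
  assumes N: "0 < N"
  shows "(\<exists>x. 0 < x \<and> 0 < collatz x \<and> (even x \<longleftrightarrow> e) \<and>
             x mod (2 * N) = u \<and> collatz x mod (2 * N) = w)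
     \<longleftrightarrow> u < 2 * N \<and> w < 2 * N \<and> (even u \<longleftrightarrow> e) \<and> [collatz u = w] (mod N)"
proof
  assume "\<exists>x. 0 < x \<and> 0 < collatz x \<and> (even x \<longleftrightarrow> e) \<and>
             x mod (2 * N) = u \<and> collatz x mod (2 * N) = w"
  then obtain x where x: "even x \<longleftrightarrow> e" "x mod (2 * N) = u" "collatz x mod (2 * N) = w"
    by blast
  have image: "[collatz x = w] (mod N)"
  proof -
    have "[collatz x = w] (mod 2 * N)" using x(3) by (auto simp: cong_def)
    then show ?thesis by (rule cong_dvd_modulus_nat) simp
  qed
  have "[x = u] (mod 2 * N)" using x(2) by (auto simp: cong_def)
  then have "[collatz u = collatz x] (mod N)" by (rule cong_sym[OF collatz_cong])
  then have "[collatz u = w] (mod N)" using image by (rule cong_trans)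
  moreover have "even u \<longleftrightarrow> even x"
    using x(2) by (metis dvd_mod_iff dvd_triv_left)
  ultimately show "u < 2 * N \<and> w < 2 * N \<and> (even u \<longleftrightarrow> e) \<and> [collatz u = w] (mod N)"
    using x N by auto
next
  assume u: "u < 2 * N \<and> w < 2 * N \<and> (even u \<longleftrightarrow> e) \<and> [collatz u = w] (mod N)"
  then obtain x where x: "x = u + 2 * N \<or> x = u + 4 * N" "[collatz x = w] (mod 2 * N)"
    using collatz_lift by blast
  have "(u + 4 * N) mod (2 * N) = u mod (2 * N)"
    using mod_mult_self1[of u 2 "2 * N"] by simp
  then have "x mod (2 * N) = u" using x(1) u by auto
  moreover have "2 \<le> x" using x(1) N by auto
  moreover have "collatz x mod (2 * N) = w" using x(2) u by (simp add: cong_def)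
  moreover have "even x \<longleftrightarrow> even u" using x(1) by auto
  ultimately show "\<exists>x. 0 < x \<and> 0 < collatz x \<and> (even x \<longleftrightarrow> e) \<and>
             x mod (2 * N) = u \<and> collatz x mod (2 * N) = w"
    using u collatz_pos by (intro exI[of _ x]) auto
qed

lemma black_arrow_double_modulus:
  "0 < N \<Longrightarrow> black_arrow (2 * N) u w \<longleftrightarrow>
     u < 2 * N \<and> w < 2 * N \<and> even u \<and> [collatz u = w] (mod N)"
  using arrow_char[of N True] by (simp add: black_arrow_collatz)

lemma red_arrow_double_modulus:
  "0 < N \<Longrightarrow> red_arrow (2 * N) u w \<longleftrightarrow>
     u < 2 * N \<and> w < 2 * N \<and> odd u \<and> [collatz u = w] (mod N)"
  using arrow_char[of N False] by (simp add: red_arrow_collatz)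

lemma parity_code_bij: "bij_betw (parity_code n) {0..<2 ^ n} {0..<2 ^ n}"
proof -
  have inj: "inj_on (parity_code n) {0..<2 ^ n}"
    by (rule inj_onI) (auto simp: parity_code_eq_iff cong_def)
  have "parity_code n ` {0..<2 ^ n} \<subseteq> {0..<2 ^ n}"
    using parity_code_less by auto
  then have "parity_code n ` {0..<2 ^ n} = {0..<2 ^ n}"
    using endo_inj_surj[OF _ _ inj] by simp
  with inj show ?thesis unfolding bij_betw_def ..
qed

lemma collatz_cong_parity_code:
  "[collatz u = w] (mod 2 ^ n) \<longleftrightarrow> parity_code (Suc n) u div 2 = parity_code (Suc n) w mod 2 ^ n"
proof -
  have "parity_code (Suc n) u div 2 = parity_code n (collatz u)" by simp
  then show ?thesis by (simp only: parity_code_trunc parity_code_eq_iff)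
qed

lemma complement_parity: "p < 2 * N \<Longrightarrow> even (2 * N - 1 - p) \<longleftrightarrow> odd p"
  for p N :: nat
  by presburger

lemma complement_half: "p < 2 * N \<Longrightarrow> (2 * N - 1 - p) div 2 = N - 1 - p div 2"
  for p N :: nat
proof -
  assume p: "p < 2 * N"
  define a where "a = p div 2"
  have "a < N" using p unfolding a_def by simp
  moreover have "p = 2 * a \<or> p = 2 * a + 1" unfolding a_def by presburger
  ultimately have "2 * N - 1 - p = 2 * (N - 1 - a) + 1 \<or> 2 * N - 1 - p = 2 * (N - 1 - a)"
    by auto
  then show ?thesis unfolding a_def[symmetric] by auto
qed

lemma complement_shift:
  fixes p q N :: nat
  assumes "p < 2 * N" and "q < 2 * N"
  shows "(2 * N - 1 - p) div 2 = (2 * N - 1 - q) mod N \<longleftrightarrow> p div 2 = q mod N"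
proof -
  have p: "(2 * N - 1 - p) div 2 = N - 1 - p div 2"
    using assms(1) by (rule complement_half)
  have q: "(2 * N - 1 - q) mod N = N - 1 - q mod N"
  proof (cases "q < N")
    case True
    then have "2 * N - 1 - q = (N - 1 - q) + N" by simp
    then have "(2 * N - 1 - q) mod N = (N - 1 - q) mod N" by (simp only: mod_add_self2)
    then show ?thesis using True by simp
  next
    case False
    then have "q mod N = q - N" using assms(2) by (simp add: mod_if)
    moreover have "2 * N - 1 - q < N" using False assms(2) by simp
    ultimately show ?thesis using False by simp
  qed
  have "p div 2 < N" "q mod N < N" using assms by auto
  then show ?thesis unfolding p q by linarith
qed

lemma self_color_dual_by_coordinates:
  fixes k :: nat and f \<sigma> :: "nat \<Rightarrow> nat" and B R :: "nat \<Rightarrow> nat \<Rightarrow> bool"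
  assumes f: "bij_betw f {0..<k} {0..<k}" and \<sigma>: "bij_betw \<sigma> {0..<k} {0..<k}"
    and black: "\<And>u w. u < k \<Longrightarrow> w < k \<Longrightarrow> black_arrow k u w \<longleftrightarrow> B (f u) (f w)"
    and red: "\<And>u w. u < k \<Longrightarrow> w < k \<Longrightarrow> red_arrow k u w \<longleftrightarrow> R (f u) (f w)"
    and swap: "\<And>p q. p < k \<Longrightarrow> q < k \<Longrightarrow>
                 (B p q \<longleftrightarrow> R (\<sigma> p) (\<sigma> q)) \<and> (R p q \<longleftrightarrow> B (\<sigma> p) (\<sigma> q))"
  shows "self_color_dual k"
proof -
  define \<rho> where "\<rho> = inv_into {0..<k} f \<circ> \<sigma> \<circ> f"
  have \<rho>_bij: "bij_betw \<rho> {0..<k} {0..<k}"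
    unfolding \<rho>_def using bij_betw_trans[OF bij_betw_trans[OF f \<sigma>] bij_betw_inv_into[OF f]]
    by (simp add: comp_assoc)
  have f_\<rho>: "f (\<rho> u) = \<sigma> (f u)" if "u < k" for u
  proof -
    have "f u \<in> {0..<k}" using that f by (auto simp: bij_betw_def)
    then have "\<sigma> (f u) \<in> f ` {0..<k}"
      using f \<sigma> by (auto simp: bij_betw_def)
    then show ?thesis unfolding \<rho>_def by (simp add: f_inv_into_f)
  qed
  have "(black_arrow k u w \<longleftrightarrow> red_arrow k (\<rho> u) (\<rho> w)) \<and>
        (red_arrow k u w \<longleftrightarrow> black_arrow k (\<rho> u) (\<rho> w))" if "u < k" "w < k" for u w
  proof -
    have "\<rho> u < k" "\<rho> w < k" "f u < k" "f w < k"
      using that \<rho>_bij f by (auto simp: bij_betw_def)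
    then show ?thesis
      using that black red swap[of "f u" "f w"] f_\<rho> by simp
  qed
  with \<rho>_bij show ?thesis
    unfolding self_color_dual_def by auto
qed

lemma self_color_dual_power_of_two: "self_color_dual (2 ^ Suc n)"
proof -
  define N :: nat where "N = 2 ^ n"
  have N: "0 < N" "2 ^ Suc n = 2 * N" unfolding N_def by simp_all
  define f where "f = parity_code (Suc n)"
  define \<sigma> where "\<sigma> p = 2 * N - 1 - p" for p
  have f_bij: "bij_betw f {0..<2 * N} {0..<2 * N}"
    using parity_code_bij[of "Suc n"] unfolding f_def N by simp
  have \<sigma>_bij: "bij_betw \<sigma> {0..<2 * N} {0..<2 * N}"
    by (rule bij_betw_byWitness[where f' = \<sigma>]) (auto simp: \<sigma>_def)
  have coordinates: "[collatz u = w] (mod N) \<longleftrightarrow> f u div 2 = f w mod N" for u w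
    unfolding f_def N_def by (rule collatz_cong_parity_code)
  show ?thesis unfolding N(2)
  proof (rule self_color_dual_by_coordinates[OF f_bij \<sigma>_bij])
    fix u w assume "u < 2 * N" "w < 2 * N"
    then show "black_arrow (2 * N) u w \<longleftrightarrow> even (f u) \<and> f u div 2 = f w mod N"
      and "red_arrow (2 * N) u w \<longleftrightarrow> odd (f u) \<and> f u div 2 = f w mod N"
      using black_arrow_double_modulus[OF N(1)] red_arrow_double_modulus[OF N(1)] coordinates
      by (simp_all add: f_def)
  next
    fix p q assume "p < 2 * N" "q < 2 * N"
    then show "((even p \<and> p div 2 = q mod N) \<longleftrightarrow> (odd (\<sigma> p) \<and> \<sigma> p div 2 = \<sigma> q mod N)) \<and>
               ((odd p \<and> p div 2 = q mod N) \<longleftrightarrow> (even (\<sigma> p) \<and> \<sigma> p div 2 = \<sigma> q mod N))"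
      using complement_parity complement_shift unfolding \<sigma>_def by simp
  qed
qed

(* A colour-swapping bijection rho of Gamma_K gives, after shifting
   its values by one, a map h on the integers (well defined mod K) satisfying
   the two congruences below: the black arrow 2w -> w becomes a red arrow, and
   the red arrow 2m+1 -> 3m+2 becomes a black arrow. *)
locale swapped_labelling =
  fixes K :: int and h :: "int \<Rightarrow> int"
  assumes h_cong: "[x = y] (mod K) \<Longrightarrow> [h x = h y] (mod K)"
    and halving: "[3 * h (2 * w) = 2 * h w] (mod K)"
    and collatz_step: "[h (2 * m + 1) + 1 = 2 * h (3 * m + 2)] (mod K)"
begin

(* Mod 3 the first congruence forces 3 | h w for all w, which makes the second
   one read 1 = 0. *)
lemma not_three_dvd: "\<not> 3 dvd K"
proof
  assume three: "3 dvd K"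
  have "3 dvd h w" for w
  proof -
    have "[2 * h w = 3 * h (2 * w)] (mod 3)"
      using cong_dvd_modulus[OF halving three] by (rule cong_sym)
    then have "3 dvd 2 * h w" by (simp add: cong_def dvd_eq_mod_eq_0)
    then show ?thesis by (simp add: prime_dvd_mult_iff)
  qed
  then have "[1 = h 1 + 1] (mod 3)" and "[2 * h 2 = 0] (mod 3)"
    by (simp_all add: cong_iff_dvd_diff)
  moreover have "[h 1 + 1 = 2 * h 2] (mod 3)"
    using cong_dvd_modulus[OF collatz_step[of 0] three] by simp
  ultimately have "[1 = 0] (mod (3::int))"
    using cong_trans by blast
  then show False by (simp add: cong_def)
qed

(* The point 0 is fixed: 3 h 0 = 2 h 0. *)
lemma h_zero: "[h 0 = 0] (mod K)"
proof -
  have "[h 0 + 2 * h 0 = 0 + 2 * h 0] (mod K)"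
    using halving[of 0] by simp
  then show ?thesis by (rule iffD1[OF cong_add_rcancel])
qed

end

locale swapped_labelling_inverse = swapped_labelling +
  fixes c :: int
  assumes three_inverse: "[3 * c = 1] (mod K)"
begin

lemma three_inverse_dvd: "K dvd (3 * c - 1)"
  using three_inverse by (simp add: cong_iff_dvd_diff)

lemma h_double: "[h (2 * w) = 2 * c * h w] (mod K)"
proof -
  have "[1 * h (2 * w) = 3 * c * h (2 * w)] (mod K)"
    using cong_scalar_right[OF three_inverse] by (rule cong_sym)
  also have "3 * c * h (2 * w) = c * (3 * h (2 * w))" by simp
  also have "[c * (3 * h (2 * w)) = c * (2 * h w)] (mod K)"
    using halving by (rule cong_scalar_left)
  finally show ?thesis by (simp add: ac_simps)
qed

lemma h_double_pow: "[h (2 ^ j * w) = (2 * c) ^ j * h w] (mod K)"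
proof (induction j)
  case (Suc j)
  have "[h (2 ^ Suc j * w) = 2 * c * h (2 ^ j * w)] (mod K)"
    using h_double[of "2 ^ j * w"] by (simp add: mult.assoc)
  also have "[2 * c * h (2 ^ j * w) = 2 * c * ((2 * c) ^ j * h w)] (mod K)"
    using Suc.IH by (rule cong_scalar_left)
  finally show ?case by (simp add: ac_simps)
qed simp

(* Solving the second congruence for the point (2w-1)/3. *)
lemma h_third: "[h (c * (2 * w - 1)) + 1 = 2 * h w] (mod K)"
proof -
  define m where "m = c * (w - 2)"
  have "c * (2 * w - 1) - (2 * m + 1) = 3 * c - 1"
    unfolding m_def by (simp add: algebra_simps)
  then have arg1: "[c * (2 * w - 1) = 2 * m + 1] (mod K)"
    unfolding cong_iff_dvd_diff by (simp only: three_inverse_dvd)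
  have "3 * m + 2 - w = (3 * c - 1) * (w - 2)"
    unfolding m_def by (simp add: algebra_simps)
  then have arg2: "[3 * m + 2 = w] (mod K)"
    unfolding cong_iff_dvd_diff by (simp only: dvd_mult2[OF three_inverse_dvd])
  have "[h (c * (2 * w - 1)) + 1 = h (2 * m + 1) + 1] (mod K)"
    using h_cong[OF arg1] by (rule cong_add) simp
  also have "[h (2 * m + 1) + 1 = 2 * h (3 * m + 2)] (mod K)"
    by (rule collatz_step)
  also have "[2 * h (3 * m + 2) = 2 * h w] (mod K)"
    using h_cong[OF arg2] by (rule cong_scalar_left)
  finally show ?thesis .
qed

(* Combining the two: the difference of h at 2^a (4x-1)/3 and at 2^a (4x-2)/3
   is a constant delta = (2/3)^a (2/3 - 1). *)
lemma h_shift: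
  "[h (2 ^ a * (c * (4 * x - 1))) = h (2 ^ a * (c * (4 * x - 2))) + (2 * c) ^ a * (2 * c - 1)] (mod K)"
proof -
  have third: "[h (c * (2 * w - 1)) = 2 * h w - 1] (mod K)" for w
    using cong_diff[OF h_third cong_refl[of 1]] by simp
  have "[h (2 ^ a * (c * (2 * (2 * x) - 1))) = (2 * c) ^ a * h (c * (2 * (2 * x) - 1))] (mod K)"
    by (rule h_double_pow)
  also have "[(2 * c) ^ a * h (c * (2 * (2 * x) - 1)) = (2 * c) ^ a * (2 * h (2 * x) - 1)] (mod K)"
    using third by (rule cong_scalar_left)
  also have "[(2 * c) ^ a * (2 * h (2 * x) - 1) = (2 * c) ^ a * (2 * (2 * c * h x) - 1)] (mod K)"
    using h_double by (intro cong_scalar_left cong_diff cong_refl)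
  also have "(2 * c) ^ a * (2 * (2 * c * h x) - 1)
      = (2 * c) ^ Suc a * (2 * h x - 1) + (2 * c) ^ a * (2 * c - 1)"
    by (simp add: algebra_simps)
  also have "[(2 * c) ^ Suc a * (2 * h x - 1) + (2 * c) ^ a * (2 * c - 1)
      = h (2 ^ Suc a * (c * (2 * x - 1))) + (2 * c) ^ a * (2 * c - 1)] (mod K)"
  proof (rule cong_add[OF _ cong_refl])
    have "[h (2 ^ Suc a * (c * (2 * x - 1))) = (2 * c) ^ Suc a * h (c * (2 * x - 1))] (mod K)"
      by (rule h_double_pow)
    also have "[(2 * c) ^ Suc a * h (c * (2 * x - 1)) = (2 * c) ^ Suc a * (2 * h x - 1)] (mod K)"
      using third by (rule cong_scalar_left)
    finally show "[(2 * c) ^ Suc a * (2 * h x - 1) = h (2 ^ Suc a * (c * (2 * x - 1)))] (mod K)"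
      by (rule cong_sym)
  qed
  finally show ?thesis by (simp add: algebra_simps)
qed

(* If K = 2^a M with M odd then 2^a y mod K only depends on y mod M, and 4 is
   invertible mod M; so every z = c r is of the form c (4x-2) mod M and h(2^a z)
   increases by delta when z is translated by c. *)
lemma h_translate:
  assumes K: "K = 2 ^ a * M" and M: "odd M"
  shows "[h (2 ^ a * (c * (r + 1))) = h (2 ^ a * (c * r)) + (2 * c) ^ a * (2 * c - 1)] (mod K)"
proof -
  have "coprime 4 M" using coprime_power_left_iff[of 2 2 M] M by simp
  then obtain q where q: "[4 * q = 1] (mod M)" using cong_solve_coprime_int by blast
  define x where "x = (r + 2) * q"
  have four_x: "[4 * x = r + 2] (mod M)"
    using cong_scalar_left[OF q, of "r + 2"] unfolding x_def by (simp add: ac_simps)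
  have "[c * (4 * x - 1) = c * ((r + 2) - 1)] (mod M)"
    using cong_scalar_left[OF cong_diff[OF four_x cong_refl[of 1]], of c] .
  moreover have "[c * (4 * x - 2) = c * ((r + 2) - 2)] (mod M)"
    using cong_scalar_left[OF cong_diff[OF four_x cong_refl[of 2]], of c] .
  ultimately have "[c * (4 * x - 1) = c * (r + 1)] (mod M)" "[c * (4 * x - 2) = c * r] (mod M)"
    by (simp_all add: add.commute)
  then have args: "[2 ^ a * (c * (4 * x - 1)) = 2 ^ a * (c * (r + 1))] (mod K)"
      "[2 ^ a * (c * (4 * x - 2)) = 2 ^ a * (c * r)] (mod K)"
    unfolding K by (auto intro: cong_cmult_leftI)
  have "[h (2 ^ a * (c * (r + 1))) = h (2 ^ a * (c * (4 * x - 1)))] (mod K)"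
    using h_cong[OF args(1)] by (rule cong_sym)
  also have "[h (2 ^ a * (c * (4 * x - 1)))
      = h (2 ^ a * (c * (4 * x - 2))) + (2 * c) ^ a * (2 * c - 1)] (mod K)"
    by (rule h_shift)
  also have "[h (2 ^ a * (c * (4 * x - 2))) + (2 * c) ^ a * (2 * c - 1)
      = h (2 ^ a * (c * r)) + (2 * c) ^ a * (2 * c - 1)] (mod K)"
    using h_cong[OF args(2)] by (rule cong_add) simp
  finally show ?thesis .
qed

(* Evaluating the translation at z = 0 and z = c and comparing with the doubling
   rule at 2^a c gives 4 delta = 0, i.e. K divides 2^(a+2). *)
lemma modulus_dvd_power_of_two:
  assumes K: "K = 2 ^ a * M" and M: "odd M"
  shows "K dvd 2 ^ (a + 2)"
proof -
  define \<delta> where "\<delta> = (2 * c) ^ a * (2 * c - 1)"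
  have at_c: "[h (2 ^ a * c) = \<delta>] (mod K)"
  proof -
    have "[h (2 ^ a * (c * (0 + 1))) = h (2 ^ a * (c * 0)) + \<delta>] (mod K)"
      unfolding \<delta>_def using K M by (rule h_translate)
    also have "[h (2 ^ a * (c * 0)) + \<delta> = 0 + \<delta>] (mod K)"
      using h_zero by (intro cong_add cong_refl) simp
    finally show ?thesis by simp
  qed
  have at_2c: "[h (2 ^ a * (2 * c)) = h (2 ^ a * c) + \<delta>] (mod K)"
    using h_translate[OF K M, of 1] unfolding \<delta>_def by (simp add: ac_simps)
  have "[\<delta> + \<delta> = 2 * c * \<delta>] (mod K)"
  proof -
    have "[\<delta> + \<delta> = h (2 ^ a * (2 * c))] (mod K)"
      using cong_trans[OF at_2c cong_add[OF at_c cong_refl[of \<delta>]]] by (rule cong_sym)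
    also have "[h (2 ^ a * (2 * c)) = 2 * c * h (2 ^ a * c)] (mod K)"
      using h_double[of "2 ^ a * c"] by (simp add: ac_simps)
    also have "[2 * c * h (2 ^ a * c) = 2 * c * \<delta>] (mod K)"
      using at_c by (rule cong_scalar_left)
    finally show ?thesis .
  qed
  from cong_scalar_left[OF this, of 3]
  have "[3 * (\<delta> + \<delta>) = 3 * c * (2 * \<delta>)] (mod K)"
    by (simp add: ac_simps)
  also have "[3 * c * (2 * \<delta>) = 1 * (2 * \<delta>)] (mod K)"
    using three_inverse by (rule cong_scalar_right)
  finally have "[4 * \<delta> + 2 * \<delta> = 0 + 2 * \<delta>] (mod K)"
    by simp
  then have four_\<delta>: "[4 * \<delta> = 0] (mod K)"
    by (rule iffD1[OF cong_add_rcancel])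
  have "[2 ^ (a + 2) = 2 ^ (a + 2) * (3 * c) ^ a * (3 - 2 * (3 * c))] (mod K)"
  proof -
    have "[(3 * c) ^ a * (3 - 2 * (3 * c)) = 1 ^ a * (3 - 2 * 1)] (mod K)"
      using three_inverse by (intro cong_mult cong_pow cong_diff cong_scalar_left cong_refl)
    from cong_scalar_left[OF this, of "2 ^ (a + 2)"] show ?thesis
      by (simp add: mult.assoc cong_sym_eq)
  qed
  also have "2 ^ (a + 2) * (3 * c) ^ a * (3 - 2 * (3 * c)) = - (3 ^ (a + 1) * (4 * \<delta>))"
    unfolding \<delta>_def by (simp add: algebra_simps)
  also have "[- (3 ^ (a + 1) * (4 * \<delta>)) = - (3 ^ (a + 1) * 0)] (mod K)"
    using four_\<delta> by (intro cong_uminus cong_scalar_left)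
  finally show ?thesis by (simp add: cong_0_iff)
qed

end

lemma (in swapped_labelling) modulus_power_of_two:
  assumes "0 < K"
  shows "\<exists>n. K = 2 ^ n"
proof -
  have "coprime 3 K"
    using prime_imp_coprime[of 3 K] not_three_dvd by simp
  then obtain c where "[3 * c = 1] (mod K)"
    using cong_solve_coprime_int by blast
  then interpret swapped_labelling_inverse K h c
    by unfold_locales
  obtain M where K: "K = 2 ^ multiplicity 2 K * M" and "\<not> 2 dvd M"
    using multiplicity_decompose'[of K 2] assms by auto
  then have "K dvd 2 ^ (multiplicity 2 K + 2)"
    by (intro modulus_dvd_power_of_two) auto
  moreover have "prime (2 :: int)" by simp
  ultimately obtain n where "normalize K = 2 ^ n"
    using divides_primepow by blast
  then show ?thesis using assms by auto
qed

definition residue :: "nat \<Rightarrow> int \<Rightarrow> nat" where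
  "residue k z = nat (z mod int k)"

lemma residue_cong: "[z = z'] (mod int k) \<Longrightarrow> residue k z = residue k z'"
  by (simp add: residue_def cong_def)

lemma mod_eq_residue: "[int x = z] (mod int k) \<Longrightarrow> x mod k = residue k z"
  unfolding residue_def cong_def by (metis nat_int of_nat_mod)

lemma cong_of_mod: "[int (x mod k) = int x] (mod int k)"
  by (simp add: cong_def of_nat_mod)

lemma black_arrow_cong:
  assumes "black_arrow k r s"
  shows "[int r = 2 * int s] (mod int k)"
proof -
  obtain x y where xy: "x mod k = r" "y mod k = s" "even x" "x div 2 = y"
    using assms unfolding black_arrow_def T0_def by blast
  have "[int r = int x] (mod int k)" using cong_of_mod[of x k] unfolding xy(1) .
  also have "int x = 2 * int y" using xy(3,4) by auto
  also have "[2 * int y = 2 * int s] (mod int k)"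
    using cong_scalar_left[OF cong_of_mod[of y k], of 2] unfolding xy(2) by (rule cong_sym)
  finally show ?thesis .
qed

lemma red_arrow_cong:
  assumes "red_arrow k r s"
  shows "[2 * int s = 3 * int r + 1] (mod int k)"
proof -
  obtain x y where xy: "x mod k = r" "y mod k = s" "odd x" "(3 * x + 1) div 2 = y"
    using assms unfolding red_arrow_def T1_def by blast
  have "[2 * int s = 2 * int y] (mod int k)"
    using cong_of_mod[of y k] unfolding xy(2) by (rule cong_scalar_left)
  also have "2 * int y = 3 * int x + 1" using xy(3,4) by presburger
  also have "[3 * int x + 1 = 3 * int r + 1] (mod int k)"
    using cong_scalar_left[OF cong_of_mod[of x k], of 3] unfolding xy(1)
    by (intro cong_add cong_refl) (rule cong_sym)
  finally show ?thesis .
qed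

lemma black_arrow_residue: "0 < k \<Longrightarrow> black_arrow k (residue k (2 * w)) (residue k w)"
proof -
  assume k: "0 < k"
  define y where "y = nat (w mod int k) + k"
  have y: "[int y = w] (mod int k)" unfolding y_def cong_def using k by simp
  show ?thesis unfolding black_arrow_def T0_def
  proof (intro exI conjI)
    show "2 * y mod k = residue k (2 * w)"
      using cong_scalar_left[OF y, of 2] by (intro mod_eq_residue) (simp add: add.commute)
  qed (use k y in \<open>auto simp: y_def intro: mod_eq_residue\<close>)
qed

lemma red_arrow_residue: "0 < k \<Longrightarrow> red_arrow k (residue k (2 * m + 1)) (residue k (3 * m + 2))"
proof -
  assume k: "0 < k"
  define y where "y = nat (m mod int k)"
  have y: "[int y = m] (mod int k)" unfolding y_def cong_def using k by simp
  show ?thesis unfolding red_arrow_def T1_def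
  proof (intro exI conjI)
    show "(2 * y + 1) mod k = residue k (2 * m + 1)"
      using cong_add[OF cong_scalar_left[OF y, of 2] cong_refl[of 1]]
      by (intro mod_eq_residue) (simp add: add.commute)
    show "(3 * (2 * y + 1) + 1) div 2 mod k = residue k (3 * m + 2)"
      using cong_add[OF cong_scalar_left[OF y, of 3] cong_refl[of 2]]
      by (intro mod_eq_residue) (simp add: add.commute)
  qed auto
qed

lemma self_color_dual_imp_power_of_two:
  assumes k: "2 \<le> k" and dual: "self_color_dual k"
  shows "\<exists>n. k = 2 ^ n"
proof -
  obtain \<rho> where swap: "\<forall>u\<in>{0..<k}. \<forall>w\<in>{0..<k}.
      (black_arrow k u w \<longleftrightarrow> red_arrow k (\<rho> u) (\<rho> w)) \<and>
      (red_arrow k u w \<longleftrightarrow> black_arrow k (\<rho> u) (\<rho> w))"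
    using dual unfolding self_color_dual_def by blast
  have residue_less: "residue k z < k" for z
    using k by (simp add: residue_def nat_less_iff)
  define h where "h z = int (\<rho> (residue k z)) + 1" for z
  interpret swapped_labelling "int k" h
  proof
    show "[h x = h y] (mod int k)" if "[x = y] (mod int k)" for x y
      using residue_cong[OF that] unfolding h_def by simp
    show "[3 * h (2 * w) = 2 * h w] (mod int k)" for w
    proof -
      have "red_arrow k (\<rho> (residue k (2 * w))) (\<rho> (residue k w))"
        using swap black_arrow_residue[of k w] k residue_less by simp
      from red_arrow_cong[OF this]
      have "[3 * int (\<rho> (residue k (2 * w))) + 1 + 2
          = 2 * int (\<rho> (residue k w)) + 2] (mod int k)"
        by (intro cong_add cong_refl) (rule cong_sym)
      then show ?thesis unfolding h_def by (simp add: algebra_simps)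
    qed
    show "[h (2 * m + 1) + 1 = 2 * h (3 * m + 2)] (mod int k)" for m
    proof -
      have "black_arrow k (\<rho> (residue k (2 * m + 1))) (\<rho> (residue k (3 * m + 2)))"
        using swap red_arrow_residue[of k m] k residue_less by simp
      from black_arrow_cong[OF this]
      have "[int (\<rho> (residue k (2 * m + 1))) + 2
          = 2 * int (\<rho> (residue k (3 * m + 2))) + 2] (mod int k)"
        by (intro cong_add cong_refl)
      then show ?thesis unfolding h_def by (simp add: algebra_simps)
    qed
  qed
  obtain n where "int k = 2 ^ n" using modulus_power_of_two k by auto
  then have "k = 2 ^ n" by (metis of_nat_eq_iff of_nat_numeral of_nat_power)
  then show ?thesis ..
qed

theorem mainTheorem17:
  fixes k :: nat
  assumes "k \<ge> 2"
  shows "self_color_dual k \<longleftrightarrow> (\<exists>n. k = 2 ^ n)"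
proof
  assume "self_color_dual k"
  then show "\<exists>n. k = 2 ^ n"
    using assms by (rule self_color_dual_imp_power_of_two[rotated])
next
  assume "\<exists>n. k = 2 ^ n"
  then obtain n where n: "k = 2 ^ n" by blast
  with assms obtain j where "n = Suc j" by (cases n) auto
  then show "self_color_dual k"
    using n self_color_dual_power_of_two by simp
qed

end
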